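(* Let $N,S,d\ge 1$ be integers and let $\pi$ be a next-token distribution on $[N]^S$ such that $\pi(t_{S+1}\mid t_{1:S})\neq 0$ for all $t_{1:S}\in[N]^S$ and $t_{S+1}\in[N]$ (all conditional distributions have full support). Then there exists $f\in\mathcal{L}(N,S,d)$ such that $d_{KL}(\pi,f)=d_{KL}(\pi,\mathcal{L}(N,S,d))$.
   Context: $[N]=\{1,\dots,N\}$. A next-token distribution $\pi$ consists of a prior probability distribution on $[N]^S$ together with, for each $t_{1:S}\in[N]^S$, a conditional probability distribution $\pi_{t_{1:S}}=\pi(\cdot\mid t_{1:S})$ on $[N]$. For $f:[N]^S\to\mathbb{R}^N$, $d_{KL}(\pi,f):=\mathbb{E}_{t_{1:S}\sim\pi}\big[\mathrm{KL}(\pi_{t_{1:S}}\,\|\,\mathrm{Softmax}(f(t_{1:S})))\big]$. The set of sequence encoders is $\mathcal{L}(N,S,d):=\{f_{W,E}: W\in\mathbb{R}^{N\times d},\ E:[N]^S\to\mathbb{R}^d\}$ with $f_{W,E}(t_{1:S})=W E(t_{1:S})$, and $d_{KL}(\pi,\mathcal{L}(N,S,d)):=\inf_{f\in\mathcal{L}(N,S,d)}d_{KL}(\pi,f)$. *)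

theory Defs
  imports Complex_Main
begin

definition ctxs :: "nat \<Rightarrow> nat \<Rightarrow> nat list set" where
  "ctxs N S = {t. length t = S \<and> set t \<subseteq> {1..N}}"

text \<open>A next-token distribution: a prior p on [N]^S and conditionals q t on [N].\<close>
definition next_token_dist :: "nat \<Rightarrow> nat \<Rightarrow> (nat list \<Rightarrow> real) \<Rightarrow> (nat list \<Rightarrow> nat \<Rightarrow> real) \<Rightarrow> bool" where
  "next_token_dist N S p q \<longleftrightarrow>
     (\<forall>t\<in>ctxs N S. p t \<ge> 0) \<and> (\<Sum>t\<in>ctxs N S. p t) = 1 \<and>
     (\<forall>t\<in>ctxs N S. (\<forall>j\<in>{1..N}. q t j \<ge> 0) \<and> (\<Sum>j\<in>{1..N}. q t j) = 1)"

definition softmax :: "nat \<Rightarrow> (nat \<Rightarrow> real) \<Rightarrow> nat \<Rightarrow> real" where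
  "softmax N v i = exp (v i) / (\<Sum>j\<in>{1..N}. exp (v j))"

definition KL :: "nat \<Rightarrow> (nat \<Rightarrow> real) \<Rightarrow> (nat \<Rightarrow> real) \<Rightarrow> real" where
  "KL N a b = (\<Sum>i\<in>{1..N}. if a i = 0 then 0 else a i * ln (a i / b i))"

definition dKL :: "nat \<Rightarrow> nat \<Rightarrow> (nat list \<Rightarrow> real) \<Rightarrow> (nat list \<Rightarrow> nat \<Rightarrow> real)
                   \<Rightarrow> (nat list \<Rightarrow> nat \<Rightarrow> real) \<Rightarrow> real" where
  "dKL N S p q f = (\<Sum>t\<in>ctxs N S. p t * KL N (q t) (softmax N (f t)))"

text \<open>f_{W,E}(t) = W E(t), W an N x d matrix (entries W i k, i in 1..N, k in 1..d), E(t) in R^d.\<close>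
definition f_WE :: "nat \<Rightarrow> (nat \<Rightarrow> nat \<Rightarrow> real) \<Rightarrow> (nat list \<Rightarrow> nat \<Rightarrow> real) \<Rightarrow> nat list \<Rightarrow> nat \<Rightarrow> real" where
  "f_WE d W E t i = (\<Sum>k\<in>{1..d}. W i k * E t k)"

definition seq_encoders :: "nat \<Rightarrow> nat \<Rightarrow> nat \<Rightarrow> (nat list \<Rightarrow> nat \<Rightarrow> real) set" where
  "seq_encoders N S d = {f_WE d W E | W E. True}"

definition dKL_set :: "nat \<Rightarrow> nat \<Rightarrow> (nat list \<Rightarrow> real) \<Rightarrow> (nat list \<Rightarrow> nat \<Rightarrow> real)
                   \<Rightarrow> (nat list \<Rightarrow> nat \<Rightarrow> real) set \<Rightarrow> real" where
  "dKL_set N S p q L = Inf (dKL N S p q ` L)"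

end

theory Submission
  imports Defs "HOL-Analysis.Analysis"
begin

text \<open>The divergence \<open>dKL(\<pi>, f)\<close> is minus the conditional entropy of \<open>\<pi>\<close>, which does not depend
  on \<open>f\<close>, plus an expected cross-entropy of the logits \<open>f(t)\<close>. Cross-entropy is invariant
  under adding a constant to the logits of a context, and for a fully supported target it
  controls the size of centred logits. Hence every encoder whose risk is below that of the zero
  encoder can be replaced, at equal risk, by one with bounded centred logits. Factoring
  \<open>W = U A\<close> with orthonormal (or zero) columns of \<open>U\<close> (Gram--Schmidt) and re-encoding by
  \<open>U\<^sup>T\<close> turns this into a bound on the parameters themselves. The risk, a continuous
  function of the parameters, then attains its global minimum on a compact parameter set.\<close>

lemma finite_ctxs: "finite (ctxs N S)"
proof -
  have "ctxs N S = {xs. set xs \<subseteq> {1..N} \<and> length xs = S}"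
    unfolding ctxs_def by auto
  then show ?thesis
    using finite_lists_length_eq[of "{1..N}" S] by simp
qed

text \<open>\<open>cross_ent N a v = - (\<Sum>i\<in>{1..N}. a i * ln (softmax N v i))\<close>.\<close>
definition cross_ent :: "nat \<Rightarrow> (nat \<Rightarrow> real) \<Rightarrow> (nat \<Rightarrow> real) \<Rightarrow> real" where
  "cross_ent N a v = (\<Sum>i\<in>{1..N}. a i * (ln (\<Sum>j\<in>{1..N}. exp (v j)) - v i))"

lemma sum_exp_pos: "(N::nat) \<ge> 1 \<Longrightarrow> 0 < (\<Sum>j\<in>{1..N}. exp (v j :: real))"
  by (intro sum_pos) auto

lemma le_ln_sum_exp:
  assumes "i \<in> {1..N::nat}"
  shows "v i \<le> ln (\<Sum>j\<in>{1..N}. exp (v j :: real))"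
proof -
  have "exp (v i) \<le> (\<Sum>j\<in>{1..N}. exp (v j))"
    using assms by (intro member_le_sum) auto
  then show ?thesis
    by (metis exp_gt_zero ln_exp ln_le_cancel_iff less_le_trans)
qed

lemma cross_ent_term_le:
  assumes "\<forall>i\<in>{1..N}. a i \<ge> 0" and "i \<in> {1..N}"
  shows "a i * (ln (\<Sum>j\<in>{1..N}. exp (v j)) - v i) \<le> cross_ent N a v"
  unfolding cross_ent_def using assms le_ln_sum_exp[of _ N v]
  by (intro member_le_sum) auto

lemma cross_ent_nonneg:
  assumes "\<forall>i\<in>{1..N}. a i \<ge> 0"
  shows "0 \<le> cross_ent N a v"
  unfolding cross_ent_def using assms le_ln_sum_exp[of _ N v]
  by (intro sum_nonneg) auto

lemma cross_ent_shift:
  assumes "N \<ge> 1" and "\<forall>i\<in>{1..N}. w i = v i - c"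
  shows "cross_ent N a w = cross_ent N a v"
proof -
  have "(\<Sum>j\<in>{1..N}. exp (w j)) = (\<Sum>j\<in>{1..N}. exp (v j)) / exp c"
    using assms(2) by (simp add: exp_diff sum_divide_distrib)
  then have "ln (\<Sum>j\<in>{1..N}. exp (w j)) = ln (\<Sum>j\<in>{1..N}. exp (v j)) - c"
    using sum_exp_pos[OF assms(1), of v] by (simp add: ln_div)
  then show ?thesis
    unfolding cross_ent_def using assms(2) by (intro sum.cong) auto
qed

lemma cross_ent_cong:
  assumes "N \<ge> 1" and "\<forall>i\<in>{1..N}. w i = v i"
  shows "cross_ent N a w = cross_ent N a v"
  using cross_ent_shift[of N w v 0] assms by simp

lemma KL_softmax_eq_entropy_plus_cross_ent:
  assumes "N \<ge> 1" and "\<forall>i\<in>{1..N}. a i > 0"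
  shows "KL N a (softmax N v) = (\<Sum>i\<in>{1..N}. a i * ln (a i)) + cross_ent N a v"
proof -
  have "ln (a i / softmax N v i) = ln (a i) + (ln (\<Sum>j\<in>{1..N}. exp (v j)) - v i)"
    if "i \<in> {1..N}" for i
  proof -
    have "a i > 0"
      using that assms(2) by blast
    then show ?thesis
      using sum_exp_pos[OF assms(1), of v] by (simp add: softmax_def ln_div ln_mult)
  qed
  then have "KL N a (softmax N v) =
      (\<Sum>i\<in>{1..N}. a i * ln (a i) + a i * (ln (\<Sum>j\<in>{1..N}. exp (v j)) - v i))"
    unfolding KL_def using assms(2) by (intro sum.cong) (auto simp: distrib_left)
  then show ?thesis
    by (simp add: cross_ent_def sum.distrib)
qed

lemma abs_le_if_centered_and_ln_sum_exp_bounded: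
  fixes N :: nat
  assumes "N \<ge> 1" and "(\<Sum>j\<in>{1..N}. v j) = 0"
    and "\<forall>j\<in>{1..N}. ln (\<Sum>k\<in>{1..N}. exp (v k)) - v j \<le> B" and "i \<in> {1..N}"
  shows "\<bar>v i\<bar> \<le> (B::real)"
proof -
  have gap: "\<bar>v i - v j\<bar> \<le> B" if j: "j \<in> {1..N}" for j
  proof -
    have "ln (\<Sum>k\<in>{1..N}. exp (v k)) - v i \<le> B" "ln (\<Sum>k\<in>{1..N}. exp (v k)) - v j \<le> B"
      using assms(3,4) j by auto
    then show ?thesis
      using le_ln_sum_exp[OF assms(4), of v] le_ln_sum_exp[OF j, of v] by linarith
  qed
  have "real N * \<bar>v i\<bar> = \<bar>\<Sum>j\<in>{1..N}. v i - v j\<bar>"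
    using assms(2) by (simp add: sum_subtractf abs_mult)
  also have "\<dots> \<le> (\<Sum>j\<in>{1..N}. \<bar>v i - v j\<bar>)"
    by (rule sum_abs)
  also have "\<dots> \<le> real N * B"
    using sum_mono[of "{1..N}" "\<lambda>j. \<bar>v i - v j\<bar>" "\<lambda>_. B"] gap by simp
  finally show ?thesis
    using assms(1) by simp
qed

lemma abs_le_if_centered_and_cross_ent_le:
  fixes N :: nat
  assumes "N \<ge> 1" and "\<forall>j\<in>{1..N}. a j > 0" and "(\<Sum>j\<in>{1..N}. v j) = 0"
    and "cross_ent N a v \<le> c" and "i \<in> {1..N}"
  shows "\<bar>v i\<bar> \<le> (\<Sum>j\<in>{1..N}. c / a j)"
proof (rule abs_le_if_centered_and_ln_sum_exp_bounded[OF assms(1,3) _ assms(5)], intro ballI)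
  fix j assume j: "j \<in> {1..N}"
  have c: "0 \<le> c"
    using cross_ent_nonneg[of N a v] assms(2,4) by force
  have "a j * (ln (\<Sum>k\<in>{1..N}. exp (v k)) - v j) \<le> c"
    using cross_ent_term_le[of N a j v] assms(2,4) j by force
  then have "ln (\<Sum>k\<in>{1..N}. exp (v k)) - v j \<le> c / a j"
    using assms(2) j by (simp add: pos_le_divide_eq mult.commute)
  also have "\<dots> \<le> (\<Sum>j\<in>{1..N}. c / a j)"
    using j assms(2) c by (intro member_le_sum) (auto intro!: divide_nonneg_pos)
  finally show "ln (\<Sum>k\<in>{1..N}. exp (v k)) - v j \<le> (\<Sum>j\<in>{1..N}. c / a j)" .
qed

definition orthonormal_or_zero_cols :: "nat \<Rightarrow> nat \<Rightarrow> (nat \<Rightarrow> nat \<Rightarrow> real) \<Rightarrow> bool" where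
  "orthonormal_or_zero_cols N d U \<longleftrightarrow>
     (\<forall>j\<in>{1..d}. \<forall>j'\<in>{1..d}. j \<noteq> j' \<longrightarrow> (\<Sum>i\<in>{1..N}. U i j * U i j') = 0) \<and>
     (\<forall>j\<in>{1..d}. (\<Sum>i\<in>{1..N}. U i j * U i j) = 1 \<or> (\<forall>i\<in>{1..N}. U i j = 0))"

lemma orthonormal_or_zero_cols_inner_combination:
  assumes "orthonormal_or_zero_cols N d U" and "j \<in> {1..d}"
  shows "(\<Sum>i\<in>{1..N}. U i j * (\<Sum>j'\<in>{1..d}. U i j' * g j')) = g j * (\<Sum>i\<in>{1..N}. U i j * U i j)"
proof -
  have "(\<Sum>i\<in>{1..N}. U i j * (\<Sum>j'\<in>{1..d}. U i j' * g j'))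
      = (\<Sum>j'\<in>{1..d}. g j' * (\<Sum>i\<in>{1..N}. U i j * U i j'))"
    by (simp add: sum_distrib_left mult_ac) (rule sum.swap)
  also have "\<dots> = g j * (\<Sum>i\<in>{1..N}. U i j * U i j)
      + (\<Sum>j'\<in>{1..d}-{j}. g j' * (\<Sum>i\<in>{1..N}. U i j * U i j'))"
    using assms(2) by (simp add: sum.remove)
  also have "(\<Sum>j'\<in>{1..d}-{j}. g j' * (\<Sum>i\<in>{1..N}. U i j * U i j')) = 0"
    using assms unfolding orthonormal_or_zero_cols_def by (intro sum.neutral) auto
  finally show ?thesis by simp
qed

lemma orthonormal_or_zero_cols_coeff_recovery:
  assumes "orthonormal_or_zero_cols N d U" and "j \<in> {1..d}" and "i \<in> {1..N}"
  shows "U i j * ((\<Sum>i'\<in>{1..N}. U i' j * (\<Sum>j'\<in>{1..d}. U i' j' * g j'))) = U i j * g j"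
  using assms orthonormal_or_zero_cols_inner_combination[OF assms(1,2), of g]
  unfolding orthonormal_or_zero_cols_def by (cases "\<forall>i\<in>{1..N}. U i j = 0") auto

lemma orthonormal_or_zero_cols_abs_le_1:
  assumes "orthonormal_or_zero_cols N d U" and "i \<in> {1..N}" and "j \<in> {1..d}"
  shows "\<bar>U i j\<bar> \<le> 1"
proof -
  consider "(\<Sum>i'\<in>{1..N}. U i' j * U i' j) = 1" | "\<forall>i'\<in>{1..N}. U i' j = 0"
    using assms(1,3) unfolding orthonormal_or_zero_cols_def by blast
  then show ?thesis
  proof cases
    case 1
    have "U i j * U i j \<le> (\<Sum>i'\<in>{1..N}. U i' j * U i' j)"
      using assms(2) by (intro member_le_sum) auto
    then have "(U i j)\<^sup>2 \<le> 1"
      using 1 by (simp add: power2_eq_square)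
    then show ?thesis
      by (simp add: abs_square_le_1)
  qed (use assms(2) in simp)
qed

text \<open>Gram--Schmidt step: \<open>u\<close> is the normalised residual of \<open>w\<close>; if the residual
  vanishes, then \<open>u = 0\<close> because \<open>x / 0 = 0\<close>.\<close>
lemma orthonormal_or_zero_cols_extend:
  assumes U: "orthonormal_or_zero_cols N d U"
  obtains u :: "nat \<Rightarrow> real" and c \<rho> where
    "orthonormal_or_zero_cols N (Suc d) (\<lambda>i j. if j = Suc d then u i else U i j)"
    and "\<forall>i\<in>{1..N}. w i = (\<Sum>j\<in>{1..d}. U i j * c j) + u i * \<rho>"
proof -
  define c where "c j = (\<Sum>i\<in>{1..N}. U i j * w i)" for j
  define r where "r i = w i - (\<Sum>j\<in>{1..d}. U i j * c j)" for i
  define \<rho> where "\<rho> = sqrt (\<Sum>i\<in>{1..N}. r i * r i)"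
  define u where "u i = r i / \<rho>" for i
  have \<rho>_sq: "\<rho> * \<rho> = (\<Sum>i\<in>{1..N}. r i * r i)"
    unfolding \<rho>_def by (simp add: sum_nonneg)
  have r_orth: "(\<Sum>i\<in>{1..N}. U i j * r i) = 0" if j: "j \<in> {1..d}" for j
  proof -
    have "(\<Sum>i\<in>{1..N}. U i j * r i) = c j - c j * (\<Sum>i\<in>{1..N}. U i j * U i j)"
      using orthonormal_or_zero_cols_inner_combination[OF U j, of c]
      by (simp add: r_def c_def right_diff_distrib sum_subtractf)
    then show ?thesis
      using U j unfolding orthonormal_or_zero_cols_def c_def by force
  qed
  have u_orth: "(\<Sum>i\<in>{1..N}. U i j * u i) = 0" if "j \<in> {1..d}" for j
    using r_orth[OF that] by (simp add: u_def sum_divide_distrib[symmetric])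
  have u_unit_or_zero: "(\<Sum>i\<in>{1..N}. u i * u i) = 1 \<or> (\<forall>i\<in>{1..N}. u i = 0)"
  proof (cases "\<rho> = 0")
    case False
    then have "(\<Sum>i\<in>{1..N}. u i * u i) = (\<rho> * \<rho>) / (\<rho> * \<rho>)"
      by (simp add: u_def \<rho>_sq sum_divide_distrib[symmetric])
    then show ?thesis
      using False by simp
  qed (simp add: u_def)
  have "orthonormal_or_zero_cols N (Suc d) (\<lambda>i j. if j = Suc d then u i else U i j)"
    using U u_orth u_unit_or_zero unfolding orthonormal_or_zero_cols_def
    by (auto simp: mult.commute le_Suc_eq)
  moreover have "w i = (\<Sum>j\<in>{1..d}. U i j * c j) + u i * \<rho>" if "i \<in> {1..N}" for i
  proof (cases "\<rho> = 0")
    case True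
    then have "r i = 0"
      using \<rho>_sq that by (simp add: sum_nonneg_eq_0_iff)
    then show ?thesis
      using True by (simp add: r_def)
  qed (simp add: u_def r_def)
  ultimately show ?thesis
    using that by blast
qed

lemma exists_orthonormal_or_zero_factorization:
  "\<exists>U A. orthonormal_or_zero_cols N d U \<and>
     (\<forall>i\<in>{1..N}. \<forall>k\<in>{1..d}. W i k = (\<Sum>j\<in>{1..d}. U i j * A j k))"
proof (induction d)
  case 0
  show ?case
    by (simp add: orthonormal_or_zero_cols_def)
next
  case (Suc d)
  then obtain U A where U: "orthonormal_or_zero_cols N d U"
    and W: "\<forall>i\<in>{1..N}. \<forall>k\<in>{1..d}. W i k = (\<Sum>j\<in>{1..d}. U i j * A j k)"
    by blast
  obtain u c \<rho> where U': "orthonormal_or_zero_cols N (Suc d) (\<lambda>i j. if j = Suc d then u i else U i j)"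
    and w: "\<forall>i\<in>{1..N}. W i (Suc d) = (\<Sum>j\<in>{1..d}. U i j * c j) + u i * \<rho>"
    using orthonormal_or_zero_cols_extend[OF U, of "\<lambda>i. W i (Suc d)"] by blast
  define A' where "A' j k = (if k = Suc d then (if j = Suc d then \<rho> else c j)
                             else if j = Suc d then 0 else A j k)" for j k
  have "W i k = (\<Sum>j\<in>{1..Suc d}. (if j = Suc d then u i else U i j) * A' j k)"
    if "i \<in> {1..N}" "k \<in> {1..Suc d}" for i k
    using that W w by (auto simp: A'_def le_Suc_eq)
  then show ?case
    using U' by blast
qed

lemma f_WE_bounded_reparametrization:
  assumes bound: "\<forall>t. \<forall>i\<in>{1..N}. \<bar>f_WE d W E t i\<bar> \<le> L"
  shows "\<exists>U e. (\<forall>i j. \<bar>U i j\<bar> \<le> 1) \<and> (\<forall>t j. \<bar>e t j\<bar> \<le> real N * L) \<and>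
           (\<forall>t. \<forall>i\<in>{1..N}. f_WE d U e t i = f_WE d W E t i)"
proof -
  obtain U A where U: "orthonormal_or_zero_cols N d U"
    and W: "\<forall>i\<in>{1..N}. \<forall>k\<in>{1..d}. W i k = (\<Sum>j\<in>{1..d}. U i j * A j k)"
    using exists_orthonormal_or_zero_factorization by blast
  define M where "M = f_WE d W E"
  define g where "g t j = (\<Sum>k\<in>{1..d}. A j k * E t k)" for t j
  define U0 where "U0 i j = (if i \<in> {1..N} \<and> j \<in> {1..d} then U i j else 0)" for i j
  define e where "e t j = (\<Sum>i\<in>{1..N}. U0 i j * M t i)" for t j
  have M_eq: "M t i = (\<Sum>j\<in>{1..d}. U i j * g t j)" if "i \<in> {1..N}" for t i
    using W that unfolding M_def f_WE_def g_def
    by (simp add: sum_distrib_left sum_distrib_right mult.assoc) (rule sum.swap)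
  have U0_le: "\<bar>U0 i j\<bar> \<le> 1" for i j
    using orthonormal_or_zero_cols_abs_le_1[OF U] by (simp add: U0_def)
  have "\<bar>e t j\<bar> \<le> real N * L" for t j
  proof -
    have "\<bar>e t j\<bar> \<le> (\<Sum>i\<in>{1..N}. \<bar>U0 i j\<bar> * \<bar>M t i\<bar>)"
      unfolding e_def abs_mult[symmetric] by (rule sum_abs)
    also have "\<dots> \<le> (\<Sum>i\<in>{1..N}. 1 * L)"
      using U0_le bound unfolding M_def by (intro sum_mono mult_mono) auto
    finally show ?thesis
      by simp
  qed
  moreover have "f_WE d U0 e t i = M t i" if i: "i \<in> {1..N}" for t i
  proof -
    have "f_WE d U0 e t i = (\<Sum>j\<in>{1..d}. U i j * (\<Sum>i'\<in>{1..N}. U i' j * (\<Sum>j'\<in>{1..d}. U i' j' * g t j')))"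
      unfolding f_WE_def e_def using i M_eq by (intro sum.cong) (auto simp: U0_def)
    also have "\<dots> = (\<Sum>j\<in>{1..d}. U i j * g t j)"
      using orthonormal_or_zero_cols_coeff_recovery[OF U _ i, of _ "g t"] by (intro sum.cong) auto
    finally show ?thesis
      using M_eq[OF i] by simp
  qed
  ultimately show ?thesis
    using U0_le unfolding M_def by blast
qed

lemma f_WE_centered:
  fixes W :: "nat \<Rightarrow> nat \<Rightarrow> real" and N :: nat
  assumes "N \<ge> 1"
  defines "W' \<equiv> \<lambda>i k. W i k - (\<Sum>i'\<in>{1..N}. W i' k) / real N"
  shows "(\<Sum>i\<in>{1..N}. f_WE d W' E t i) = 0"
    and "f_WE d W' E t i = f_WE d W E t i - (\<Sum>k\<in>{1..d}. (\<Sum>i'\<in>{1..N}. W i' k) / real N * E t k)"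
proof -
  have "(\<Sum>i\<in>{1..N}. W' i k) = 0" for k
    using assms(1) by (simp add: W'_def sum_subtractf)
  then show "(\<Sum>i\<in>{1..N}. f_WE d W' E t i) = 0"
    unfolding f_WE_def by (subst sum.swap) (simp add: sum_distrib_right[symmetric])
  show "f_WE d W' E t i = f_WE d W E t i - (\<Sum>k\<in>{1..d}. (\<Sum>i'\<in>{1..N}. W i' k) / real N * E t k)"
    by (simp add: f_WE_def W'_def left_diff_distrib sum_subtractf)
qed

definition expected_cross_ent ::
    "nat \<Rightarrow> nat list set \<Rightarrow> (nat list \<Rightarrow> real) \<Rightarrow> (nat list \<Rightarrow> nat \<Rightarrow> real) \<Rightarrow> (nat list \<Rightarrow> nat \<Rightarrow> real) \<Rightarrow> real" where
  "expected_cross_ent N C p q f = (\<Sum>t\<in>C. p t * cross_ent N (q t) (f t))"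

lemma expected_cross_ent_cong:
  assumes "N \<ge> 1" and "\<forall>t\<in>C. \<forall>i\<in>{1..N}. f t i = g t i"
  shows "expected_cross_ent N C p q f = expected_cross_ent N C p q g"
  unfolding expected_cross_ent_def using assms cross_ent_cong by (intro sum.cong) auto

lemma expected_cross_ent_nonneg:
  assumes "\<forall>t\<in>C. p t \<ge> 0" and "\<forall>t\<in>C. \<forall>i\<in>{1..N}. q t i \<ge> 0"
  shows "0 \<le> expected_cross_ent N C p q f"
  unfolding expected_cross_ent_def using assms cross_ent_nonneg by (intro sum_nonneg) auto

lemma continuous_on_expected_cross_ent_f_WE:
  assumes "N \<ge> 1"
  shows "continuous_on UNIV (\<lambda>x::(nat \<Rightarrow> nat \<Rightarrow> real) \<times> (nat list \<Rightarrow> nat \<Rightarrow> real).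
           expected_cross_ent N C p q (f_WE d (fst x) (snd x)))"
proof -
  have "continuous_on UNIV (\<lambda>x::(nat \<Rightarrow> nat \<Rightarrow> real) \<times> (nat list \<Rightarrow> nat \<Rightarrow> real). fst x j k)"
    and "continuous_on UNIV (\<lambda>x::(nat \<Rightarrow> nat \<Rightarrow> real) \<times> (nat list \<Rightarrow> nat \<Rightarrow> real). snd x t k)" for j t k
    by (rule continuous_on_product_then_coordinatewise,
        rule continuous_on_product_then_coordinatewise, intro continuous_intros)+
  then show ?thesis
    unfolding expected_cross_ent_def cross_ent_def f_WE_def
    by (intro continuous_intros)
      (auto simp del: One_nat_def simp: sum_exp_pos[OF assms, THEN less_imp_neq, THEN not_sym])
qed

lemma expected_cross_ent_centered_encoder:
  assumes N: "N \<ge> 1"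
  obtains W' E' where "\<forall>t. (\<Sum>i\<in>{1..N}. f_WE d W' E' t i) = 0"
    and "\<forall>t i. t \<notin> C \<or> p t = 0 \<longrightarrow> f_WE d W' E' t i = 0"
    and "expected_cross_ent N C p q (f_WE d W' E') = expected_cross_ent N C p q (f_WE d W E)"
proof -
  define W' where "W' i k = W i k - (\<Sum>i'\<in>{1..N}. W i' k) / real N" for i k
  define E' where "E' t k = (if t \<in> C \<and> p t \<noteq> 0 then E t k else 0)" for t k
  define s where "s t = (\<Sum>k\<in>{1..d}. (\<Sum>i'\<in>{1..N}. W i' k) / real N * E t k)" for t
  have shift: "\<forall>i\<in>{1..N}. f_WE d W' E' t i = f_WE d W E t i - s t" if "t \<in> C" "p t \<noteq> 0" for t
    using f_WE_centered(2)[OF N, where W=W and E=E' and t=t and d=d] that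
    by (simp add: W'_def E'_def f_WE_def s_def)
  have "expected_cross_ent N C p q (f_WE d W' E') = expected_cross_ent N C p q (f_WE d W E)"
    unfolding expected_cross_ent_def
  proof (intro sum.cong refl)
    fix t assume t: "t \<in> C"
    show "p t * cross_ent N (q t) (f_WE d W' E' t) = p t * cross_ent N (q t) (f_WE d W E t)"
      using cross_ent_shift[OF N shift[OF t]] by (cases "p t = 0") auto
  qed
  moreover have "\<forall>t. (\<Sum>i\<in>{1..N}. f_WE d W' E' t i) = 0"
    using f_WE_centered(1)[OF N] unfolding W'_def by blast
  moreover have "\<forall>t i. t \<notin> C \<or> p t = 0 \<longrightarrow> f_WE d W' E' t i = 0"
    by (auto simp: f_WE_def E'_def)
  ultimately show ?thesis
    using that by blast
qed

lemma expected_cross_ent_sublevel_bounded_encoder: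
  fixes D :: real
  assumes N: "N \<ge> 1" and fin: "finite C" and p: "\<forall>t\<in>C. p t \<ge> 0"
    and q: "\<forall>t\<in>C. \<forall>i\<in>{1..N}. q t i > 0"
    and le: "expected_cross_ent N C p q (f_WE d W E) \<le> D"
  defines "L \<equiv> (\<Sum>t\<in>C. \<Sum>i\<in>{1..N}. D / (p t * q t i))"
  shows "\<exists>U e. (\<forall>i j. \<bar>U i j\<bar> \<le> 1) \<and> (\<forall>t j. \<bar>e t j\<bar> \<le> real N * L) \<and>
           expected_cross_ent N C p q (f_WE d U e) = expected_cross_ent N C p q (f_WE d W E)"
proof -
  obtain W' E' where centered: "\<forall>t. (\<Sum>i\<in>{1..N}. f_WE d W' E' t i) = 0"
    and vanish: "\<forall>t i. t \<notin> C \<or> p t = 0 \<longrightarrow> f_WE d W' E' t i = 0"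
    and same: "expected_cross_ent N C p q (f_WE d W' E') = expected_cross_ent N C p q (f_WE d W E)"
    using expected_cross_ent_centered_encoder[OF N] by blast
  define M where "M = f_WE d W' E'"
  have "0 \<le> expected_cross_ent N C p q (f_WE d W E)"
    using p q by (intro expected_cross_ent_nonneg) (auto simp: less_imp_le)
  then have L_term_nonneg: "0 \<le> D / (p t * q t i)" if "t \<in> C" "i \<in> {1..N}" for t i
    using le p q that by (auto intro!: divide_nonneg_nonneg mult_nonneg_nonneg simp: less_imp_le)
  have "\<bar>M t i\<bar> \<le> L" if i: "i \<in> {1..N}" for t i
  proof (cases "t \<in> C \<and> p t \<noteq> 0")
    case True
    then have pt: "p t > 0"
      using p by force
    have "p t * cross_ent N (q t) (M t) \<le> expected_cross_ent N C p q M"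
      unfolding expected_cross_ent_def using True fin p q cross_ent_nonneg
      by (intro member_le_sum) (auto simp: less_imp_le)
    then have "cross_ent N (q t) (M t) \<le> D / p t"
      using le same pt by (simp add: M_def pos_le_divide_eq mult.commute)
    then have "\<bar>M t i\<bar> \<le> (\<Sum>j\<in>{1..N}. D / p t / q t j)"
      using abs_le_if_centered_and_cross_ent_le[OF N _ _ _ i] centered True q
      unfolding M_def by blast
    also have "\<dots> = (\<Sum>j\<in>{1..N}. D / (p t * q t j))"
      by simp
    also have "\<dots> \<le> L"
      unfolding L_def using True fin L_term_nonneg
      by (intro member_le_sum) (auto intro!: sum_nonneg)
    finally show ?thesis .
  next
    case False
    then show ?thesis
      unfolding L_def using vanish L_term_nonneg by (auto simp: M_def intro!: sum_nonneg)
  qed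
  then obtain U e where "\<forall>i j. \<bar>U i j\<bar> \<le> 1" "\<forall>t j. \<bar>e t j\<bar> \<le> real N * L"
    and "\<forall>t. \<forall>i\<in>{1..N}. f_WE d U e t i = M t i"
    using f_WE_bounded_reparametrization[of N d W' E' L] unfolding M_def by blast
  with same expected_cross_ent_cong[OF N] show ?thesis
    unfolding M_def by metis
qed

lemma compact_PiE_UNIV:
  fixes S :: "'a \<Rightarrow> 'b::topological_space set"
  assumes "\<And>i. compact (S i)"
  shows "compact (Pi\<^sub>E UNIV S)"
proof -
  have "compactin (product_topology (\<lambda>i. euclidean) UNIV) (Pi\<^sub>E UNIV S)"
    using assms by (simp add: compactin_PiE compactin_euclidean_iff)
  then show ?thesis
    by (simp add: euclidean_product_topology compactin_euclidean_iff)
qed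

lemma compact_abs_le_functions:
  "compact {M :: 'a \<Rightarrow> 'b \<Rightarrow> real. \<forall>i j. \<bar>M i j\<bar> \<le> r}"
proof -
  have "{M :: 'a \<Rightarrow> 'b \<Rightarrow> real. \<forall>i j. \<bar>M i j\<bar> \<le> r} = Pi\<^sub>E UNIV (\<lambda>_. Pi\<^sub>E UNIV (\<lambda>_. {-r..r}))"
    unfolding set_eq_iff PiE_UNIV_domain Pi_iff by (auto simp: abs_le_iff minus_le_iff)
  then show ?thesis
    by (simp add: compact_PiE_UNIV)
qed

lemma continuous_attains_global_inf:
  fixes G :: "'a::topological_space \<Rightarrow> real"
  assumes "compact K" and "K \<noteq> {}" and "continuous_on K G" and "\<forall>x. \<exists>y\<in>K. G y \<le> G x"
  shows "\<exists>x0. \<forall>x. G x0 \<le> G x"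
  using continuous_attains_inf[OF assms(1-3)] assms(4) by (meson order_trans)

lemma expected_cross_ent_f_WE_attains_min:
  assumes N: "N \<ge> 1" and fin: "finite C" and p: "\<forall>t\<in>C. p t \<ge> 0"
    and q: "\<forall>t\<in>C. \<forall>i\<in>{1..N}. q t i > 0"
  shows "\<exists>W0 E0. \<forall>W E. expected_cross_ent N C p q (f_WE d W0 E0) \<le> expected_cross_ent N C p q (f_WE d W E)"
proof -
  define G where "G x = expected_cross_ent N C p q (f_WE d (fst x) (snd x))"
    for x :: "(nat \<Rightarrow> nat \<Rightarrow> real) \<times> (nat list \<Rightarrow> nat \<Rightarrow> real)"
  define D where "D = G (\<lambda>_ _. 0, \<lambda>_ _. 0)"
  define L where "L = (\<Sum>t\<in>C. \<Sum>i\<in>{1..N}. D / (p t * q t i))"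
  define K :: "((nat \<Rightarrow> nat \<Rightarrow> real) \<times> (nat list \<Rightarrow> nat \<Rightarrow> real)) set"
    where "K = {U. \<forall>i j. \<bar>U i j\<bar> \<le> 1} \<times> {e. \<forall>t j. \<bar>e t j\<bar> \<le> real N * L}"
  have zero_in_K: "(\<lambda>_ _. 0, \<lambda>_ _. 0) \<in> K"
  proof -
    have "0 \<le> D"
      using p q by (simp add: D_def G_def expected_cross_ent_nonneg less_imp_le)
    then have "0 \<le> L"
      unfolding L_def using p q by (auto intro!: sum_nonneg divide_nonneg_nonneg mult_nonneg_nonneg simp: less_imp_le)
    then show ?thesis
      by (simp add: K_def)
  qed
  have dominated: "\<exists>y\<in>K. G y \<le> G x" for x
  proof (cases "G x \<le> D")
    case True
    then obtain U e where "(U, e) \<in> K" and "G (U, e) = G x"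
      using expected_cross_ent_sublevel_bounded_encoder[OF N fin p q, of d "fst x" "snd x" D]
      unfolding G_def K_def L_def by auto
    then show ?thesis
      by (metis order.refl)
  next
    case False
    then have "G (\<lambda>_ _. 0, \<lambda>_ _. 0) \<le> G x"
      unfolding D_def by simp
    then show ?thesis
      using zero_in_K by blast
  qed
  have "compact K"
    unfolding K_def by (intro compact_Times compact_abs_le_functions)
  moreover have "continuous_on K G"
    unfolding G_def by (rule continuous_on_subset[OF continuous_on_expected_cross_ent_f_WE[OF N]]) simp
  ultimately obtain x0 where "\<forall>x. G x0 \<le> G x"
    using continuous_attains_global_inf[of K G] zero_in_K dominated by blast
  then show ?thesis
    unfolding G_def by fastforce
qed

lemma dKL_eq_entropy_plus_expected_cross_ent:
  assumes "N \<ge> 1" and "\<forall>t\<in>ctxs N S. \<forall>i\<in>{1..N}. q t i > 0"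
  shows "dKL N S p q f = (\<Sum>t\<in>ctxs N S. p t * (\<Sum>i\<in>{1..N}. q t i * ln (q t i)))
           + expected_cross_ent N (ctxs N S) p q f"
proof -
  have "p t * KL N (q t) (softmax N (f t))
      = p t * (\<Sum>i\<in>{1..N}. q t i * ln (q t i)) + p t * cross_ent N (q t) (f t)"
    if "t \<in> ctxs N S" for t
    using assms(2) that
    by (simp add: KL_softmax_eq_entropy_plus_cross_ent[OF assms(1)] distrib_left)
  then show ?thesis
    unfolding dKL_def expected_cross_ent_def by (simp add: sum.distrib)
qed

theorem lemma1:
  fixes N S d :: nat
    and p :: "nat list \<Rightarrow> real" and q :: "nat list \<Rightarrow> nat \<Rightarrow> real"
  assumes "N \<ge> 1" "S \<ge> 1" "d \<ge> 1"
    and "next_token_dist N S p q"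
    and "\<forall>t\<in>ctxs N S. \<forall>j\<in>{1..N}. q t j \<noteq> 0"
  shows "\<exists>f\<in>seq_encoders N S d. dKL N S p q f = dKL_set N S p q (seq_encoders N S d)"
proof -
  have p: "\<forall>t\<in>ctxs N S. p t \<ge> 0"
    using assms(4) unfolding next_token_dist_def by blast
  have q: "\<forall>t\<in>ctxs N S. \<forall>i\<in>{1..N}. q t i > 0"
    using assms(4,5) unfolding next_token_dist_def by (metis less_eq_real_def)
  obtain W0 E0 where min: "\<forall>W E. expected_cross_ent N (ctxs N S) p q (f_WE d W0 E0)
                                \<le> expected_cross_ent N (ctxs N S) p q (f_WE d W E)"
    using expected_cross_ent_f_WE_attains_min[OF assms(1) finite_ctxs p q] by blast
  have "dKL N S p q (f_WE d W0 E0) \<le> dKL N S p q f" if "f \<in> seq_encoders N S d" for f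
    using that min dKL_eq_entropy_plus_expected_cross_ent[OF assms(1) q]
    unfolding seq_encoders_def by auto
  moreover have "f_WE d W0 E0 \<in> seq_encoders N S d"
    unfolding seq_encoders_def by blast
  ultimately have "dKL_set N S p q (seq_encoders N S d) = dKL N S p q (f_WE d W0 E0)"
    unfolding dKL_set_def by (intro cInf_eq_minimum) auto
  then show ?thesis
    using \<open>f_WE d W0 E0 \<in> seq_encoders N S d\<close> by auto
qed

end
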